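(* Let $(\alpha^{(j)})_{j\ge1}$ be a sequence of integer sequences, where $\alpha^{(j)}$ has length $n_j$, entries $\alpha^{(j)}_1\ge\dots\ge\alpha^{(j)}_{n_j}\ge0$, and even sum $s_j\le n_j(n_j-1)$. Suppose $n_j\to\infty$ and $s_j=o(n_j^2)$ (i.e. $s_j/n_j^2\to0$). Then $$\lim_{j\to\infty} TV\big(P(\alpha^{(j)}),\,P(\alpha^{(j)}\wedge T(n_j,s_j))\big)=0.$$
   Context: Notation: $\langle a^r\rangle$ denotes $r$ consecutive copies of $a$. For integers $n\ge1$ and even $s$ with $0\le s\le n(n-1)$, let $m=\min\{k\ge 1 : s\le k(k-1)\}$ and define the length-$n$ sequence $T(n,s)$ recursively: (i) if $s=0$, $T(n,s)=\langle 0^n\rangle$; (ii) if $s>0$ and $n>m$, $T(n,s)=\langle \gamma_1,\dots,\gamma_m,0^{n-m}\rangle$ with $\gamma=T(m,s)$; (iii) if $s>0$ and $n\le m$, $T(n,s)=\langle n-1,\gamma_1+1,\dots,\gamma_{n-1}+1\rangle$ with $\gamma=T(n-1,s-2(n-1))$. For length-$n$ sequences $\alpha,\beta$ with equal sums, the meet $\alpha\wedge\beta$ is the length-$n$ sequence with $(\alpha\wedge\beta)_k=\min\{\sum_{i=1}^k\alpha_i,\sum_{i=1}^k\beta_i\}-\min\{\sum_{i=1}^{k-1}\alpha_i,\sum_{i=1}^{k-1}\beta_i\}$ (empty sums are $0$). For a length-$n$ sequence $\alpha$ of integers in $\{0,\dots,n-1\}$, let $r_i$ be the number of entries of $\alpha$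 equal to $i$, and define $P(\alpha)=\langle r_1/n,\dots,r_{n-1}/n\rangle$, i.e. $P(\alpha)_i=r_i/n$ for $i=1,\dots,n-1$. For two such vectors $P,Q$ indexed by $\omega\in\Omega=\{1,\dots,n-1\}$, the (paper's) total variation distance is $TV(P,Q)=\sup_{\omega\in\Omega}|P_\omega-Q_\omega|$. *)

theory Defs
  imports Complex_Main
begin

(* The sequence T(n,s). Lengths n, even sums s (as nat). The guard n = 0 only
   makes the function total; it is never reached for n >= 1. *)
function Tseq :: "nat \<Rightarrow> nat \<Rightarrow> int list" where
  "Tseq n s =
     (if n = 0 then []
      else if s = 0 then replicate n 0
      else (let m = (LEAST k. 1 \<le> k \<and> s \<le> k * (k - 1)) in
            if m < n then Tseq m s @ replicate (n - m) 0
            else int (n - 1) # map (\<lambda>g. g + 1) (Tseq (n - 1) (s - 2 * (n - 1)))))"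
  by pat_completeness auto
termination
  by (relation "measure fst") (auto simp: Let_def)

definition psum :: "int list \<Rightarrow> nat \<Rightarrow> int" where
  "psum a k = sum_list (take k a)"

definition meet :: "int list \<Rightarrow> int list \<Rightarrow> int list" where
  "meet a b = map (\<lambda>k. min (psum a k) (psum b k) - min (psum a (k - 1)) (psum b (k - 1)))
                  [1..<length a + 1]"

definition Pvec :: "int list \<Rightarrow> nat \<Rightarrow> real" where
  "Pvec a i = real (card {k. k < length a \<and> a ! k = int i}) / real (length a)"

definition TV :: "nat \<Rightarrow> (nat \<Rightarrow> real) \<Rightarrow> (nat \<Rightarrow> real) \<Rightarrow> real" where
  "TV n P Q = (SUP i \<in> {1..<n}. \<bar>P i - Q i\<bar>)"

end

theory Submission imports Defs begin

text \<open>Past position \<open>m\<close>, the prefix sums of \<open>T(n,s)\<close> have already reached the total \<open>s\<close>, so they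
dominate the prefix sums of any nonnegative sequence with sum \<open>s\<close>. Hence the meet of \<open>\<alpha>\<close> and \<open>T(n,s)\<close>
coincides with \<open>\<alpha>\<close> from position \<open>m\<close> on, the two value histograms differ by at most \<open>m/n\<close> in every
entry, and \<open>m \<le> \<surd>s + 2 = o(n)\<close>.\<close>

declare Tseq.simps [simp del]

definition min_vertices :: "nat \<Rightarrow> nat" where
  "min_vertices s = (LEAST k. 1 \<le> k \<and> s \<le> k * (k - 1))"

lemma le_min_vertices_times:
  assumes "1 \<le> n" "s \<le> n * (n - 1)"
  shows "s \<le> min_vertices s * (min_vertices s - 1)"
  using LeastI[of "\<lambda>k. 1 \<le> k \<and> s \<le> k * (k - 1)" n] assms
  unfolding min_vertices_def by auto

lemma less_min_vertices_imp: "1 \<le> k \<Longrightarrow> k < min_vertices s \<Longrightarrow> k * (k - 1) < s"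
  unfolding min_vertices_def using not_less_Least by fastforce

lemma min_vertices_le_sqrt: "real (min_vertices s) \<le> sqrt (real s) + 2"
proof (cases "min_vertices s \<le> 2")
  case True
  then show ?thesis using real_sqrt_ge_zero[of "real s"] by linarith
next
  case False
  define k where "k = min_vertices s - 1"
  have "k * (k - 1) < s" using False less_min_vertices_imp[of k s] by (simp add: k_def)
  moreover have "(k - 1) * (k - 1) \<le> k * (k - 1)" by simp
  ultimately have "real (k - 1) ^ 2 < real s"
    by (metis of_nat_less_iff of_nat_mult order.strict_trans1 power2_eq_square)
  then have "real (k - 1) < sqrt (real s)" using real_less_rsqrt by blast
  then show ?thesis using False by (simp add: k_def of_nat_diff)
qed

lemma Tseq_zero: "Tseq n 0 = replicate n 0"
  by (subst Tseq.simps) simp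

lemma Tseq_pad:
  "0 < s \<Longrightarrow> min_vertices s < n \<Longrightarrow>
   Tseq n s = Tseq (min_vertices s) s @ replicate (n - min_vertices s) 0"
  by (subst Tseq.simps) (simp add: min_vertices_def Let_def)

lemma Tseq_head:
  "0 < s \<Longrightarrow> 0 < n \<Longrightarrow> n \<le> min_vertices s \<Longrightarrow>
   Tseq n s = int (n - 1) # map (\<lambda>g. g + 1) (Tseq (n - 1) (s - 2 * (n - 1)))"
  by (subst Tseq.simps) (simp add: min_vertices_def Let_def)

lemma length_Tseq [simp]: "length (Tseq n s) = n"
proof (induction n arbitrary: s rule: less_induct)
  case (less n)
  consider "n = 0" | "s = 0" | "0 < s" "min_vertices s < n" | "0 < s" "0 < n" "n \<le> min_vertices s"
    by linarith
  then show ?case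
  proof cases
    case 1
    then show ?thesis by (simp add: Tseq.simps)
  qed (simp_all add: Tseq_zero Tseq_pad Tseq_head less.IH)
qed

text \<open>The recursive call in case (iii) of \<open>T(n,s)\<close> is again a valid instance.\<close>
lemma Tseq_head_call_valid:
  assumes "even s" "0 < s" "s \<le> n * (n - 1)" "n \<le> min_vertices s"
  shows "2 * (n - 1) \<le> s" "s - 2 * (n - 1) \<le> (n - 1) * (n - 1 - 1)"
proof -
  have n2: "2 \<le> n"
  proof (rule ccontr)
    assume "\<not> 2 \<le> n"
    then have "n = 0 \<or> n = 1" by auto
    then show False using assms(2,3) by auto
  qed
  have below: "(n - 1) * (n - 2) < s"
    using less_min_vertices_imp[of "n - 1" s] n2 assms(4) by (simp add: numeral_2_eq_2)
  show "2 * (n - 1) \<le> s"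
  proof (cases "4 \<le> n")
    case True
    then have "2 * (n - 1) \<le> (n - 1) * (n - 2)" by (simp add: mult.commute)
    then show ?thesis using below by linarith
  next
    case False
    then have "n = 2 \<or> n = 3" using n2 by auto
    then show ?thesis using below assms(1) by (auto elim!: evenE)
  qed
  have "n * (n - 1) = (n - 1) * (n - 1 - 1) + 2 * (n - 1)"
    using n2 by (cases n; cases "n - 1") (simp_all add: algebra_simps)
  then show "s - 2 * (n - 1) \<le> (n - 1) * (n - 1 - 1)" using assms(3) by linarith
qed

lemma sum_list_Tseq: "even s \<Longrightarrow> s \<le> n * (n - 1) \<Longrightarrow> sum_list (Tseq n s) = int s"
proof (induction n arbitrary: s rule: less_induct)
  case (less n)
  consider "s = 0" | "0 < s" "min_vertices s < n" | "0 < s" "n \<le> min_vertices s"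
    by linarith
  then show ?case
  proof cases
    case 1
    then show ?thesis by (simp add: Tseq_zero sum_list_replicate)
  next
    case 2
    have "1 \<le> n" using 2 by linarith
    then have "s \<le> min_vertices s * (min_vertices s - 1)"
      using less.prems(2) by (rule le_min_vertices_times)
    with 2 less show ?thesis by (simp add: Tseq_pad sum_list_replicate)
  next
    case 3
    have "0 < n" using 3(1) less.prems(2) by (cases n) auto
    note valid = Tseq_head_call_valid[OF less.prems(1) 3(1) less.prems(2) 3(2)]
    have "sum_list (Tseq (n - 1) (s - 2 * (n - 1))) = int (s - 2 * (n - 1))"
      using less.IH[of "n - 1"] valid less.prems(1) \<open>0 < n\<close> by (simp add: diff_diff_left)
    then show ?thesis
      using \<open>0 < n\<close> 3 valid(1) by (simp add: Tseq_head sum_list_addf sum_list_triv of_nat_diff)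
  qed
qed

lemma psum_Tseq_past_min_vertices:
  assumes "even s" "s \<le> n * (n - 1)" "min_vertices s \<le> k" "k \<le> n"
  shows "psum (Tseq n s) k = int s"
proof (cases "0 < s \<and> min_vertices s < n")
  case True
  then have "s \<le> min_vertices s * (min_vertices s - 1)"
    using le_min_vertices_times[OF _ assms(2)] by linarith
  with assms(1) have "sum_list (Tseq (min_vertices s) s) = int s" by (rule sum_list_Tseq)
  then show ?thesis using True assms(3) by (simp add: psum_def Tseq_pad sum_list_replicate)
next
  case False
  then consider "s = 0" | "k = n" using assms(3,4) by linarith
  then show ?thesis
    by cases (simp_all add: psum_def Tseq_zero sum_list_replicate sum_list_Tseq[OF assms(1,2)])
qed

lemma psum_le_sum_list: "(\<And>x. x \<in> set a \<Longrightarrow> 0 \<le> x) \<Longrightarrow> psum a k \<le> sum_list a"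
  unfolding psum_def
  by (metis append_take_drop_id in_set_dropD le_add_same_cancel1 sum_list_append sum_list_nonneg)

lemma length_meet [simp]: "length (meet a b) = length a"
  by (cases "length a") (auto simp: meet_def)

lemma nth_meet:
  "p < length a \<Longrightarrow>
   meet a b ! p = min (psum a (p + 1)) (psum b (p + 1)) - min (psum a p) (psum b p)"
  by (simp add: meet_def del: upt_Suc)

lemma nth_meet_eq_left:
  assumes "\<And>k. K \<le> k \<Longrightarrow> k \<le> length a \<Longrightarrow> psum a k \<le> psum b k" "K \<le> p" "p < length a"
  shows "meet a b ! p = a ! p"
proof -
  have "psum a (p + 1) = psum a p + a ! p"
    using assms(3) by (simp add: psum_def take_Suc_conv_app_nth)
  then show ?thesis using nth_meet[OF assms(3)] assms(1)[of p] assms(1)[of "p + 1"] assms(2,3)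
    by simp
qed

lemma nth_meet_Tseq_eq:
  assumes nonneg: "\<And>x. x \<in> set a \<Longrightarrow> 0 \<le> x"
    and even: "even (sum_list a)"
    and bound: "sum_list a \<le> int (length a) * (int (length a) - 1)"
    and p: "min_vertices (nat (sum_list a)) \<le> p" "p < length a"
  shows "meet a (Tseq (length a) (nat (sum_list a))) ! p = a ! p"
proof (rule nth_meet_eq_left[OF _ p])
  define s where "s = nat (sum_list a)"
  have s: "int s = sum_list a" using nonneg by (simp add: s_def sum_list_nonneg)
  have "even s" using even s by (metis even_of_nat)
  moreover have "int (length a * (length a - 1)) = int (length a) * (int (length a) - 1)"
    by (cases "length a") (simp_all add: algebra_simps)
  then have "int s \<le> int (length a * (length a - 1))" using bound s by linarith
  then have "s \<le> length a * (length a - 1)" by (simp only: of_nat_le_iff)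
  ultimately show "psum a k \<le> psum (Tseq (length a) (nat (sum_list a))) k"
    if "min_vertices (nat (sum_list a)) \<le> k" "k \<le> length a" for k
    using that psum_Tseq_past_min_vertices psum_le_sum_list[OF nonneg] s unfolding s_def by metis
qed

lemma card_le_card_add_if_Diff_eq:
  assumes "finite B" "A - {..<K} = B - {..<K}"
  shows "card A \<le> card B + K"
proof -
  have "card A \<le> card (A \<inter> {..<K}) + card (A - {..<K})"
    by (metis Int_Diff_disjoint Int_Diff_Un card_Un_le)
  also have "card (A \<inter> {..<K}) \<le> K"
    by (metis card_lessThan card_mono finite_lessThan inf_le2)
  also have "card (A - {..<K}) \<le> card B"
    using assms by (metis Diff_subset card_mono)
  finally show ?thesis by simp
qed

lemma Pvec_diff_le:
  assumes "length b = length a" "\<And>p. K \<le> p \<Longrightarrow> p < length a \<Longrightarrow> b ! p = a ! p"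
  shows "\<bar>Pvec a i - Pvec b i\<bar> \<le> real K / real (length a)"
proof -
  let ?A = "{k. k < length a \<and> a ! k = int i}"
  let ?B = "{k. k < length b \<and> b ! k = int i}"
  have eq: "?A - {..<K} = ?B - {..<K}" using assms by auto
  have "card ?A \<le> card ?B + K" "card ?B \<le> card ?A + K"
    using card_le_card_add_if_Diff_eq[OF _ eq] card_le_card_add_if_Diff_eq[OF _ eq[symmetric]]
    by auto
  then have "\<bar>real (card ?A) - real (card ?B)\<bar> / real (length a) \<le> real K / real (length a)"
    by (intro divide_right_mono) linarith+
  then show ?thesis unfolding Pvec_def assms(1) by (simp add: diff_divide_distrib[symmetric] abs_divide)
qed

lemma TV_le:
  assumes "1 < n" "\<And>i. \<bar>P i - Q i\<bar> \<le> B"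
  shows "TV n P Q \<le> B"
  unfolding TV_def using assms by (intro cSUP_least) auto

lemma TV_nonneg:
  assumes "1 < n"
  shows "0 \<le> TV n P Q"
proof -
  have "\<bar>P 1 - Q 1\<bar> \<le> TV n P Q"
    unfolding TV_def using assms by (intro cSUP_upper) auto
  then show ?thesis by linarith
qed

lemma TV_meet_Tseq_le:
  assumes "\<And>x. x \<in> set a \<Longrightarrow> 0 \<le> x"
    and "even (sum_list a)"
    and "sum_list a \<le> int (length a) * (int (length a) - 1)"
    and "1 < length a"
  shows "TV (length a) (Pvec a) (Pvec (meet a (Tseq (length a) (nat (sum_list a)))))
         \<le> (sqrt (real_of_int (sum_list a)) + 2) / real (length a)"
proof (rule TV_le[OF assms(4)])
  fix i
  let ?m = "min_vertices (nat (sum_list a))"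
  have "\<bar>Pvec a i - Pvec (meet a (Tseq (length a) (nat (sum_list a)))) i\<bar> \<le> real ?m / real (length a)"
    by (rule Pvec_diff_le) (simp_all add: nth_meet_Tseq_eq assms(1-3))
  also have "\<dots> \<le> (sqrt (real_of_int (sum_list a)) + 2) / real (length a)"
    using min_vertices_le_sqrt[of "nat (sum_list a)"] assms(1)
    by (intro divide_right_mono) (simp_all add: sum_list_nonneg)
  finally show "\<bar>Pvec a i - Pvec (meet a (Tseq (length a) (nat (sum_list a)))) i\<bar>
                \<le> (sqrt (real_of_int (sum_list a)) + 2) / real (length a)" .
qed

lemma sqrt_add_const_div_tendsto_0:
  fixes s n :: "nat \<Rightarrow> real"
  assumes n: "filterlim n at_top sequentially" "\<And>j. 0 \<le> n j"
    and s: "(\<lambda>j. s j / (n j)\<^sup>2) \<longlonglongrightarrow> 0"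
  shows "(\<lambda>j. (sqrt (s j) + c) / n j) \<longlonglongrightarrow> 0"
proof -
  have "(\<lambda>j. sqrt (s j / (n j)\<^sup>2) + c / n j) \<longlonglongrightarrow> sqrt 0 + 0"
    by (intro tendsto_add tendsto_real_sqrt s tendsto_divide_0[OF tendsto_const]
        filterlim_at_top_imp_at_infinity n)
  moreover have "sqrt (s j / (n j)\<^sup>2) + c / n j = (sqrt (s j) + c) / n j" for j
    using n(2)[of j] by (simp add: real_sqrt_divide add_divide_distrib)
  ultimately show ?thesis by simp
qed

theorem theorem5:
  fixes \<alpha> :: "nat \<Rightarrow> int list"
  assumes noninc: "\<And>j. sorted_wrt (\<ge>) (\<alpha> j)"
    and nonneg: "\<And>j x. x \<in> set (\<alpha> j) \<Longrightarrow> 0 \<le> x"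
    and even_sum: "\<And>j. even (sum_list (\<alpha> j))"
    and sum_bound: "\<And>j. sum_list (\<alpha> j) \<le> int (length (\<alpha> j)) * (int (length (\<alpha> j)) - 1)"
    and len_inf: "filterlim (\<lambda>j. length (\<alpha> j)) at_top sequentially"
    and sum_small: "(\<lambda>j. real_of_int (sum_list (\<alpha> j)) / (real (length (\<alpha> j)))\<^sup>2) \<longlonglongrightarrow> 0"
  shows "(\<lambda>j. TV (length (\<alpha> j)) (Pvec (\<alpha> j))
              (Pvec (meet (\<alpha> j) (Tseq (length (\<alpha> j)) (nat (sum_list (\<alpha> j))))))) \<longlonglongrightarrow> 0"
proof (rule tendsto_sandwich[OF _ _ tendsto_const])
  have "\<forall>\<^sub>F j in sequentially. 2 \<le> length (\<alpha> j)"
    using len_inf by (simp add: filterlim_at_top)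
  then have long: "\<forall>\<^sub>F j in sequentially. 1 < length (\<alpha> j)"
    by eventually_elim simp
  show "\<forall>\<^sub>F j in sequentially. 0 \<le> TV (length (\<alpha> j)) (Pvec (\<alpha> j))
          (Pvec (meet (\<alpha> j) (Tseq (length (\<alpha> j)) (nat (sum_list (\<alpha> j))))))"
    using long by eventually_elim (rule TV_nonneg)
  show "\<forall>\<^sub>F j in sequentially. TV (length (\<alpha> j)) (Pvec (\<alpha> j))
          (Pvec (meet (\<alpha> j) (Tseq (length (\<alpha> j)) (nat (sum_list (\<alpha> j))))))
        \<le> (sqrt (real_of_int (sum_list (\<alpha> j))) + 2) / real (length (\<alpha> j))"
    using long by eventually_elim (intro TV_meet_Tseq_le nonneg even_sum sum_bound)
  show "(\<lambda>j. (sqrt (real_of_int (sum_list (\<alpha> j))) + 2) / real (length (\<alpha> j))) \<longlonglongrightarrow> 0"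
    using sqrt_add_const_div_tendsto_0[OF filterlim_compose[OF filterlim_real_sequentially len_inf]
        _ sum_small] by simp
qed

end
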